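(* Let $G$ be a compact connected Lie group with Lie algebra $\mathfrak{g}$, embedded as a subgroup of some $U_n$. For $\xi\in\mathfrak{g}$ let $\eta_\xi:\mathbb{R}\to G$ be $\eta_\xi(t)=\exp(t\xi)$. If $\xi_1,\xi_2\in\mathfrak{g}$ satisfy $\exp(\xi_1)=\exp(\xi_2)$, then the path $t\mapsto \eta_{-\xi_1}(t)\eta_{\xi_2}(t)$ is a polynomial loop in $G$.
   Context: Via $G\subseteq U_n\subseteq M_n(\mathbb{C})$, a loop $\gamma:S^1=\mathbb{R}/\mathbb{Z}\to G$ (equivalently a $1$-periodic path $\mathbb{R}\to G$) is a polynomial loop if its Fourier series in $M_n(\mathbb{C})$ is a finite Laurent polynomial $\sum_{k=-N}^N \gamma_k z^k$, where $z=e^{2\pi i t}$. The group of such loops is $L_{\mathrm{pol}}G$; this does not depend on the embedding. *)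

theory Defs
  imports "HOL-Analysis.Analysis"
begin

definition mat_pow :: "complex^'n^'n \<Rightarrow> nat \<Rightarrow> complex^'n^'n" where
  "mat_pow A k = (((**) A) ^^ k) (mat 1)"

definition mexp :: "complex^'n^'n \<Rightarrow> complex^'n^'n" where
  "mexp A = (\<Sum>k. (1 / fact k) *\<^sub>R mat_pow A k)"

definition conj_transpose :: "complex^'n^'n \<Rightarrow> complex^'n^'n" where
  "conj_transpose A = (\<chi> i j. cnj (A $ j $ i))"

definition unitary_group :: "(complex^'n^'n) set" where
  "unitary_group = {U. U ** conj_transpose U = mat 1 \<and> conj_transpose U ** U = mat 1}"

text \<open>A compact connected Lie group embedded as a subgroup of U_n: a compact (hence closed,
  hence Lie by Cartan) connected subgroup of the unitary group.\<close>
definition compact_connected_matrix_group :: "(complex^'n^'n) set \<Rightarrow> bool" where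
  "compact_connected_matrix_group G \<longleftrightarrow>
     G \<subseteq> unitary_group \<and> mat 1 \<in> G \<and>
     (\<forall>A\<in>G. \<forall>B\<in>G. A ** B \<in> G) \<and> (\<forall>A\<in>G. conj_transpose A \<in> G) \<and>
     compact G \<and> connected G"

definition lie_algebra :: "(complex^'n^'n) set \<Rightarrow> (complex^'n^'n) set" where
  "lie_algebra G = {\<xi>. \<forall>t::real. mexp (t *\<^sub>R \<xi>) \<in> G}"

definition eta :: "complex^'n^'n \<Rightarrow> real \<Rightarrow> complex^'n^'n" where
  "eta \<xi> t = mexp (t *\<^sub>R \<xi>)"

text \<open>Polynomial loop in G: a path R -> G that is a finite Laurent polynomial in
  z = exp(2 pi i t) (hence automatically 1-periodic).\<close>
definition polynomial_loop :: "(complex^'n^'n) set \<Rightarrow> (real \<Rightarrow> complex^'n^'n) \<Rightarrow> bool" where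
  "polynomial_loop G \<gamma> \<longleftrightarrow> (\<forall>t. \<gamma> t \<in> G) \<and>
     (\<exists>(N::nat) (c :: int \<Rightarrow> complex^'n^'n). \<forall>t i j.
        \<gamma> t $ i $ j = (\<Sum>k\<in>{-int N..int N}. c k $ i $ j * exp (2 * pi * \<i> * of_int k * of_real t)))"

end

theory Submission
  imports Defs "Jordan_Normal_Form.Jordan_Normal_Form_Uniqueness" "Jordan_Normal_Form.Jordan_Normal_Form_Existence"
begin

(* Since G is compact, every one-parameter subgroup t \<mapsto> exp (t \<xi>) is bounded. On a Jordan chain,
   (\<xi> - \<lambda>) x = w and (\<xi> - \<lambda>) w = 0, the exponential acts by exp (t \<lambda>) (x + t w); boundedness
   for t and -t leaves no room for the linear drift, so w = 0 and the Jordan normal form of \<xi> is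
   diagonal: \<xi>_i = P_i D_i P_i^-1 with D_i = diag d_i. Now exp \<xi>1 = exp \<xi>2 says that R = P_1^-1 P_2
   intertwines exp D_1 and exp D_2, so R_ab \<noteq> 0 forces d2_b - d1_a \<in> 2 \<pi> i \<int>. Hence the entries of
   exp (-t \<xi>1) exp (t \<xi>2) = P_1 exp (-t D_1) R exp (t D_2) P_2^-1 are combinations of exp (2 \<pi> i k t)
   with integer k. *)

no_notation Matrix.vec_index (infixl \<open>$\<close> 100)
hide_const (open) Matrix.mat Matrix.vec

section \<open>Cartesian matrices as Jordan normal form matrices\<close>

(* Jordan_Normal_Form works with nat-indexed matrices; a fixed enumeration of the finite index
   type transports between the two representations. *)
definition ix_of_nat :: "nat \<Rightarrow> 'n::finite" where
  "ix_of_nat = (SOME h. bij_betw h {0..<CARD('n)} UNIV)"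

definition nat_of_ix :: "'n::finite \<Rightarrow> nat" where
  "nat_of_ix = inv_into {0..<CARD('n)} ix_of_nat"

lemma bij_betw_ix_of_nat: "bij_betw (ix_of_nat :: nat \<Rightarrow> 'n::finite) {0..<CARD('n)} UNIV"
proof -
  have "\<exists>h. bij_betw h {0..<CARD('n)} (UNIV :: 'n set)"
    by (rule ex_bij_betw_nat_finite) simp
  then show ?thesis unfolding ix_of_nat_def by (rule someI_ex)
qed

lemma nat_of_ix_less [simp]: "nat_of_ix (a :: 'n::finite) < CARD('n)"
  using bij_betw_ix_of_nat[where 'n='n] unfolding nat_of_ix_def
  by (metis atLeastLessThan_iff bij_betw_def inv_into_into UNIV_I)

lemma ix_of_nat_of_ix [simp]: "ix_of_nat (nat_of_ix a) = (a :: 'n::finite)"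
  using bij_betw_ix_of_nat[where 'n='n] unfolding nat_of_ix_def
  by (simp add: bij_betw_def f_inv_into_f)

lemma nat_of_ix_of_nat [simp]: "i < CARD('n::finite) \<Longrightarrow> nat_of_ix (ix_of_nat i :: 'n) = i"
  using bij_betw_ix_of_nat[where 'n='n] unfolding nat_of_ix_def
  by (simp add: bij_betw_def inv_into_f_f)

lemma nat_of_ix_eq_iff [simp]: "nat_of_ix a = nat_of_ix b \<longleftrightarrow> a = (b :: 'n::finite)"
  by (metis ix_of_nat_of_ix)

lemma ix_of_nat_eq_iff:
  "i < CARD('n::finite) \<Longrightarrow> j < CARD('n) \<Longrightarrow>
    (ix_of_nat i :: 'n) = ix_of_nat j \<longleftrightarrow> i = j"
  by (metis nat_of_ix_of_nat)

lemma sum_UNIV_ix_of_nat: "(\<Sum>a\<in>UNIV. f a) = (\<Sum>i=0..<CARD('n::finite). f (ix_of_nat i :: 'n))"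
  using sum.reindex_bij_betw[OF bij_betw_ix_of_nat, of f] by simp

definition mat_of_cart :: "'a^'n^'n \<Rightarrow> 'a mat" where
  "mat_of_cart X = Matrix.mat CARD('n) CARD('n) (\<lambda>(i, j). X $ ix_of_nat i $ ix_of_nat j)"

definition cart_of_mat :: "'a mat \<Rightarrow> 'a^'n^'n" where
  "cart_of_mat M = (\<chi> a b. M $$ (nat_of_ix a, nat_of_ix b))"

definition vec_of_cart :: "'a^'n \<Rightarrow> 'a Matrix.vec" where
  "vec_of_cart x = Matrix.vec CARD('n) (\<lambda>i. x $ ix_of_nat i)"

definition cart_of_vec :: "'a Matrix.vec \<Rightarrow> 'a^'n::finite" where
  "cart_of_vec v = (\<chi> a. Matrix.vec_index v (nat_of_ix a))"

lemma mat_of_cart_carrier [simp]: "mat_of_cart (X :: 'a^'n^'n) \<in> carrier_mat CARD('n) CARD('n)"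
  unfolding mat_of_cart_def by simp

lemma cart_of_mat_of_cart [simp]: "cart_of_mat (mat_of_cart X) = X"
  by (simp add: cart_of_mat_def mat_of_cart_def Finite_Cartesian_Product.vec_eq_iff)

lemma mat_of_cart_of_mat [simp]:
  "M \<in> carrier_mat CARD('n) CARD('n) \<Longrightarrow> mat_of_cart (cart_of_mat M :: 'a^'n^'n) = M"
  by (rule eq_matI) (auto simp: cart_of_mat_def mat_of_cart_def)

lemma cart_of_vec_of_cart [simp]: "cart_of_vec (vec_of_cart x) = x"
  by (simp add: cart_of_vec_def vec_of_cart_def Finite_Cartesian_Product.vec_eq_iff)

lemma vec_of_cart_of_vec [simp]:
  "v \<in> carrier_vec CARD('n) \<Longrightarrow> vec_of_cart (cart_of_vec v :: 'a^'n) = v"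
  by (rule eq_vecI) (auto simp: cart_of_vec_def vec_of_cart_def)

lemma vec_of_cart_eq_0_iff: "vec_of_cart (x :: 'a::zero^'n) = 0\<^sub>v CARD('n) \<longleftrightarrow> x = 0"
proof -
  have "vec_of_cart (0 :: 'a^'n) = 0\<^sub>v CARD('n)"
    by (rule eq_vecI) (auto simp: vec_of_cart_def)
  then show ?thesis by (metis cart_of_vec_of_cart)
qed

lemma mat_of_cart_mult:
  "mat_of_cart (X ** Y) = mat_of_cart X * mat_of_cart (Y :: 'a::semiring_1^'n^'n)"
  by (rule eq_matI)
    (auto simp: mat_of_cart_def matrix_matrix_mult_def scalar_prod_def sum_UNIV_ix_of_nat)

lemma mat_of_cart_mult_vec:
  "mat_of_cart X *\<^sub>v vec_of_cart x = vec_of_cart (X *v (x :: 'a::semiring_1^'n))"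
  by (rule eq_vecI)
    (auto simp: mat_of_cart_def vec_of_cart_def matrix_vector_mult_def scalar_prod_def sum_UNIV_ix_of_nat)

lemma mat_of_cart_char_matrix:
  "char_matrix (mat_of_cart A) ev = mat_of_cart (A - mat ev :: 'a::field^'n^'n)"
  by (rule eq_matI) (auto simp: mat_of_cart_def char_matrix_def Finite_Cartesian_Product.mat_def ix_of_nat_eq_iff)

lemma cart_of_mat_mult:
  "M \<in> carrier_mat CARD('n) CARD('n) \<Longrightarrow> N \<in> carrier_mat CARD('n) CARD('n) \<Longrightarrow>
    (cart_of_mat (M * N) :: 'a::semiring_1^'n^'n) = cart_of_mat M ** cart_of_mat N"
  by (metis cart_of_mat_of_cart mat_of_cart_of_mat mat_of_cart_mult)

lemma cart_of_mat_one: "(cart_of_mat (1\<^sub>m CARD('n)) :: 'a::semiring_1^'n^'n) = mat 1"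
  by (simp add: cart_of_mat_def Finite_Cartesian_Product.mat_def Finite_Cartesian_Product.vec_eq_iff)

lemma mat_pow_0 [simp]: "mat_pow A 0 = mat 1"
  by (simp add: mat_pow_def)

lemma mat_pow_Suc: "mat_pow A (Suc k) = A ** mat_pow A k"
  by (simp add: mat_pow_def)

lemma mat_pow_scaleR: "mat_pow (t *\<^sub>R A) k = (t ^ k) *\<^sub>R mat_pow A k"
  by (induction k) (simp_all add: mat_pow_Suc scalar_matrix_assoc matrix_scalar_ac mult.commute)

definition mat_l1_norm :: "'a::real_normed_vector^'n^'m \<Rightarrow> real" where
  "mat_l1_norm X = (\<Sum>i\<in>UNIV. \<Sum>j\<in>UNIV. norm (X $ i $ j))"

lemma mat_l1_norm_nonneg: "0 \<le> mat_l1_norm X"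
  unfolding mat_l1_norm_def by (intro sum_nonneg) auto

lemma norm_le_sum_norm_components: "norm (x :: 'a::real_normed_vector^'n) \<le> (\<Sum>i\<in>UNIV. norm (x $ i))"
  unfolding norm_vec_def by (rule L2_set_le_sum) simp

lemma norm_le_mat_l1_norm: "norm X \<le> mat_l1_norm X"
proof -
  have "norm X \<le> (\<Sum>i\<in>UNIV. norm (X $ i))" by (rule norm_le_sum_norm_components)
  also have "\<dots> \<le> mat_l1_norm X"
    unfolding mat_l1_norm_def by (intro sum_mono norm_le_sum_norm_components)
  finally show ?thesis .
qed

lemma mat_l1_norm_mult:
  "mat_l1_norm (X ** Y) \<le> mat_l1_norm X * mat_l1_norm (Y :: 'a::real_normed_algebra_1^'p^'n)"
proof -
  have row_le: "(\<Sum>j\<in>UNIV. norm (Y$k$j)) \<le> mat_l1_norm Y" for k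
    unfolding mat_l1_norm_def by (rule member_le_sum) (auto intro: sum_nonneg)
  have "mat_l1_norm (X ** Y)
      \<le> (\<Sum>i\<in>UNIV. \<Sum>j\<in>UNIV. \<Sum>k\<in>UNIV. norm (X$i$k) * norm (Y$k$j))"
    unfolding mat_l1_norm_def matrix_matrix_mult_def
    by (intro sum_mono) (auto intro!: order.trans[OF norm_sum] sum_mono norm_mult_ineq)
  also have "\<dots> = (\<Sum>i\<in>UNIV. \<Sum>k\<in>UNIV. norm (X$i$k) * (\<Sum>j\<in>UNIV. norm (Y$k$j)))"
    by (rule sum.cong[OF refl], subst sum.swap) (simp add: sum_distrib_left)
  also have "\<dots> \<le> (\<Sum>i\<in>UNIV. \<Sum>k\<in>UNIV. norm (X$i$k) * mat_l1_norm Y)"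
    by (intro sum_mono mult_left_mono row_le) auto
  also have "\<dots> = mat_l1_norm X * mat_l1_norm Y"
    unfolding mat_l1_norm_def by (simp add: sum_distrib_right)
  finally show ?thesis .
qed

lemma mat_l1_norm_mat_pow:
  "mat_l1_norm (mat_pow (A :: complex^'n^'n) k) \<le> mat_l1_norm (mat 1 :: complex^'n^'n) * mat_l1_norm A ^ k"
proof (induction k)
  case (Suc k)
  have "mat_l1_norm (mat_pow A (Suc k)) \<le> mat_l1_norm A * mat_l1_norm (mat_pow A k)"
    unfolding mat_pow_Suc by (rule mat_l1_norm_mult)
  also have "\<dots> \<le> mat_l1_norm A * (mat_l1_norm (mat 1 :: complex^'n^'n) * mat_l1_norm A ^ k)"
    by (intro mult_left_mono Suc.IH mat_l1_norm_nonneg)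
  finally show ?case by (simp add: algebra_simps)
qed simp

lemma summable_mexp_series: "summable (\<lambda>k. (1 / fact k) *\<^sub>R mat_pow (A :: complex^'n^'n) k)"
proof (rule summable_comparison_test)
  let ?c = "mat_l1_norm (mat 1 :: complex^'n^'n)"
  show "\<exists>N. \<forall>k\<ge>N.
      norm ((1 / fact k) *\<^sub>R mat_pow A k) \<le> ?c * (inverse (fact k) * mat_l1_norm A ^ k)"
    using order.trans[OF norm_le_mat_l1_norm mat_l1_norm_mat_pow, of A]
    by (simp add: divide_simps)
  show "summable (\<lambda>k. ?c * (inverse (fact k) * mat_l1_norm A ^ k))"
    by (intro summable_mult summable_exp)
qed

lemma mexp_component_sums:
  "(\<lambda>k. mat_pow A k $ i $ j / fact k) sums (mexp (A :: complex^'n^'n) $ i $ j)"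
proof -
  have "bounded_linear (\<lambda>X :: complex^'n^'n. X $ i $ j)"
    using bounded_linear_compose[OF bounded_linear_vec_nth bounded_linear_vec_nth] .
  from bounded_linear.sums[OF this summable_sums[OF summable_mexp_series]]
  have "(\<lambda>k. ((1 / fact k) *\<^sub>R mat_pow A k) $ i $ j) sums (mexp A $ i $ j)"
    unfolding mexp_def .
  then show ?thesis by (simp only: vector_scaleR_component) (simp add: scaleR_conv_of_real)
qed

lemma mexp_mult_vec_component_sums:
  "(\<lambda>k. (mat_pow A k *v x) $ i / fact k) sums ((mexp A *v x) $ i)"
proof -
  have "(\<lambda>k. \<Sum>j\<in>UNIV. (mat_pow A k $ i $ j / fact k) * x $ j)
      sums (\<Sum>j\<in>UNIV. mexp A $ i $ j * x $ j)"
    by (intro sums_sum sums_mult2 mexp_component_sums)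
  then show ?thesis by (simp add: matrix_vector_mult_def sum_divide_distrib)
qed

lemma exp_sums: "(\<lambda>k. z ^ k / fact k) sums exp (z :: 'a::{real_normed_field,banach})"
  using exp_converges[of z] by (simp add: scaleR_conv_of_real divide_inverse mult.commute)

lemma matrix_mult_mult_component:
  "(P ** M ** Q) $ i $ j = (\<Sum>a\<in>UNIV. \<Sum>b\<in>UNIV. P $ i $ a * M $ a $ b * Q $ b $ j)"
  unfolding matrix_matrix_mult_def
  by (simp add: sum_distrib_left sum_distrib_right mult.assoc) (rule sum.swap)

definition diag_matrix :: "('n \<Rightarrow> 'a::zero) \<Rightarrow> 'a^'n^'n" where
  "diag_matrix d = (\<chi> i j. if i = j then d i else 0)"

lemma diag_matrix_one: "diag_matrix (\<lambda>_. 1) = mat 1"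
  by (simp add: diag_matrix_def Finite_Cartesian_Product.mat_def)

lemma diag_matrix_mult_component: "(diag_matrix d ** X) $ i $ j = d i * X $ i $ j"
  by (simp add: diag_matrix_def matrix_matrix_mult_def if_distrib if_distribR cong: if_cong)

lemma mult_diag_matrix_component: "(X ** diag_matrix d) $ i $ j = X $ i $ j * d j"
  by (simp add: diag_matrix_def matrix_matrix_mult_def if_distrib if_distribR cong: if_cong)

lemma diag_matrix_mult: "diag_matrix d ** diag_matrix e = diag_matrix (\<lambda>i. d i * e i)"
  by (simp add: Finite_Cartesian_Product.vec_eq_iff diag_matrix_mult_component) (simp add: diag_matrix_def)

lemma conj_diag_matrix_component:
  "(P ** diag_matrix d ** Q) $ i $ j = (\<Sum>a\<in>UNIV. P $ i $ a * d a * Q $ a $ j)"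
  by (simp add: matrix_matrix_mult_def[of "P ** diag_matrix d" Q] mult_diag_matrix_component)

lemma mat_pow_conj_diag_matrix:
  fixes P Q :: "complex^'n^'n"
  assumes "P ** Q = mat 1" "Q ** P = mat 1"
  shows "mat_pow (P ** diag_matrix d ** Q) k = P ** diag_matrix (\<lambda>a. d a ^ k) ** Q"
proof (induction k)
  case 0
  show ?case using assms by (simp add: diag_matrix_one)
next
  case (Suc k)
  have "mat_pow (P ** diag_matrix d ** Q) (Suc k)
      = P ** diag_matrix d ** (Q ** P) ** diag_matrix (\<lambda>a. d a ^ k) ** Q"
    by (simp add: mat_pow_Suc Suc.IH matrix_mul_assoc)
  also have "\<dots> = P ** (diag_matrix d ** diag_matrix (\<lambda>a. d a ^ k)) ** Q"
    using assms by (simp add: matrix_mul_assoc)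
  finally show ?case by (simp add: diag_matrix_mult)
qed

lemma mexp_conj_diag_matrix:
  fixes P Q :: "complex^'n^'n"
  assumes "P ** Q = mat 1" "Q ** P = mat 1"
  shows "mexp (P ** diag_matrix d ** Q) = P ** diag_matrix (\<lambda>a. exp (d a)) ** Q"
proof -
  have "(\<lambda>k. mat_pow (P ** diag_matrix d ** Q) k $ i $ j / fact k)
      sums ((P ** diag_matrix (\<lambda>a. exp (d a)) ** Q) $ i $ j)" for i j
  proof -
    have "(\<lambda>k. \<Sum>a\<in>UNIV. (P $ i $ a * Q $ a $ j) * (d a ^ k / fact k))
        sums (\<Sum>a\<in>UNIV. (P $ i $ a * Q $ a $ j) * exp (d a))"
      by (intro sums_sum sums_mult exp_sums)
    then show ?thesis
      by (simp add: mat_pow_conj_diag_matrix[OF assms] conj_diag_matrix_component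
          sum_divide_distrib algebra_simps)
  qed
  then show ?thesis
    by (simp add: Finite_Cartesian_Product.vec_eq_iff sums_unique2[OF mexp_component_sums])
qed

lemma scaleR_conj_diag_matrix:
  "t *\<^sub>R (P ** diag_matrix d ** Q) = P ** diag_matrix (\<lambda>a. of_real t * d a) ** (Q :: complex^'n^'n)"
  by (simp add: Finite_Cartesian_Product.vec_eq_iff conj_diag_matrix_component scaleR_sum_right)
    (simp add: scaleR_conv_of_real algebra_simps)

section \<open>Bounded one-parameter groups have no Jordan chains\<close>

lemma mat_pow_mult_jordan_chain:
  fixes A :: "complex^'n^'n"
  assumes "A *v w = ev *s w" and "A *v x = ev *s x + w"
  shows "mat_pow A k *v x = ev ^ k *s x + (of_nat k * ev ^ (k - 1)) *s w"
proof (induction k)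
  case (Suc k)
  have "mat_pow A (Suc k) *v x = ev ^ k *s (ev *s x + w) + (of_nat k * ev ^ (k - 1)) *s (ev *s w)"
    by (simp add: mat_pow_Suc matrix_vector_mul_assoc[symmetric] Suc.IH
        matrix_vector_right_distrib vector_scalar_commute assms)
  also have "\<dots> = ev ^ Suc k *s x + (of_nat (Suc k) * ev ^ (Suc k - 1)) *s w"
    by (cases k) (simp_all add: Finite_Cartesian_Product.vec_eq_iff algebra_simps)
  finally show ?case .
qed simp

lemma linear_times_exp_sums:
  "(\<lambda>k. of_nat k * ev ^ (k - 1) * t ^ k / fact k) sums (t * exp (t * ev :: complex))"
proof -
  have "(\<lambda>k. t * ((t * ev) ^ k / fact k)) sums (t * exp (t * ev))"
    by (intro sums_mult exp_sums)
  moreover have "t * ((t * ev) ^ k / fact k) = of_nat (Suc k) * ev ^ (Suc k - 1) * t ^ Suc k / fact (Suc k)" for k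
    by (simp add: field_simps power_mult_distrib del: of_nat_Suc)
  ultimately have "(\<lambda>k. of_nat (Suc k) * ev ^ (Suc k - 1) * t ^ Suc k / fact (Suc k)) sums (t * exp (t * ev))"
    by simp
  then show ?thesis
    by (subst (asm) sums_Suc_iff) simp
qed

lemma mexp_mult_jordan_chain_component:
  fixes A :: "complex^'n^'n"
  assumes "A *v w = ev *s w" and "A *v x = ev *s x + w"
  shows "(mexp (t *\<^sub>R A) *v x) $ i = exp (of_real t * ev) * (x $ i + of_real t * w $ i)"
proof -
  have "(mat_pow (t *\<^sub>R A) k *v x) $ i / fact k
      = x $ i * ((of_real t * ev) ^ k / fact k) + w $ i * (of_nat k * ev ^ (k - 1) * of_real t ^ k / fact k)"
    for k
  proof -
    have "(mat_pow (t *\<^sub>R A) k *v x) $ i = t ^ k *\<^sub>R ((mat_pow A k *v x) $ i)"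
      by (simp add: mat_pow_scaleR matrix_vector_mult_def scaleR_sum_right)
    then show ?thesis
      by (simp add: mat_pow_mult_jordan_chain[OF assms] scaleR_conv_of_real field_simps power_mult_distrib)
  qed
  moreover have "(\<lambda>k. x $ i * ((of_real t * ev) ^ k / fact k)
        + w $ i * (of_nat k * ev ^ (k - 1) * of_real t ^ k / fact k))
      sums (x $ i * exp (of_real t * ev) + w $ i * (of_real t * exp (of_real t * ev)))"
    by (intro sums_add sums_mult exp_sums linear_times_exp_sums)
  ultimately have "(\<lambda>k. (mat_pow (t *\<^sub>R A) k *v x) $ i / fact k)
      sums (exp (of_real t * ev) * (x $ i + of_real t * w $ i))"
    by (simp add: algebra_simps)
  then show ?thesis
    using sums_unique2[OF mexp_mult_vec_component_sums] by blast
qed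

lemma unbounded_affine_complex:
  fixes a b :: complex
  assumes "b \<noteq> 0"
  obtains t :: real where "K < cmod (a + of_real t * b)"
proof -
  define t where "t = (\<bar>K\<bar> + cmod a + 1) / cmod b"
  have "0 \<le> t" by (simp add: t_def)
  then have "cmod (of_real t * b) = t * cmod b"
    by (simp add: norm_mult)
  also have "\<dots> = \<bar>K\<bar> + cmod a + 1"
    using assms by (simp add: t_def)
  moreover have "cmod (of_real t * b) - cmod a \<le> cmod (a + of_real t * b)"
    by (metis add.commute norm_diff_ineq)
  ultimately show thesis
    using that[of t] by linarith
qed

(* The bound at -t gives |exp (t ev)| \<ge> |b| / B, so the second bound would keep |a + t b|
   below B C / |b| for all t. *)
lemma exp_times_affine_unbounded:
  fixes ev a b :: complex
  assumes "b \<noteq> 0"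
    and bound_b: "\<And>t::real. cmod (exp (of_real t * ev) * b) \<le> B"
    and bound_ab: "\<And>t::real. cmod (exp (of_real t * ev) * (a + of_real t * b)) \<le> C"
  shows False
proof -
  let ?e = "\<lambda>t::real. cmod (exp (of_real t * ev))"
  have "0 < cmod b" using \<open>b \<noteq> 0\<close> by simp
  moreover have "cmod b \<le> B" using bound_b[of 0] by simp
  ultimately have "0 < B" by linarith
  have lower: "cmod b \<le> ?e t * B" for t
  proof -
    have "exp (of_real t * ev) * exp (of_real (- t) * ev) = 1"
      by (simp add: exp_add[symmetric])
    then have "cmod b = ?e t * cmod (exp (of_real (- t) * ev) * b)"
      by (metis mult.assoc mult_1 norm_mult)
    also have "\<dots> \<le> ?e t * B"
      by (intro mult_left_mono bound_b) simp
    finally show ?thesis .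
  qed
  have upper: "cmod b * cmod (a + of_real t * b) \<le> B * C" for t
  proof -
    have "cmod b * cmod (a + of_real t * b) \<le> ?e t * B * cmod (a + of_real t * b)"
      by (intro mult_right_mono lower) simp
    also have "\<dots> = B * cmod (exp (of_real t * ev) * (a + of_real t * b))"
      by (simp add: norm_mult)
    also have "\<dots> \<le> B * C"
      using \<open>0 < B\<close> by (intro mult_left_mono bound_ab) simp
    finally show ?thesis .
  qed
  obtain t where "B * C / cmod b < cmod (a + of_real t * b)"
    using unbounded_affine_complex[OF \<open>b \<noteq> 0\<close>] .
  then have "B * C < cmod b * cmod (a + of_real t * b)"
    using \<open>0 < cmod b\<close> by (simp add: field_simps)
  with upper[of t] show False
    by linarith
qed

lemma norm_mult_vec_component_le:
  "cmod ((M *v y) $ i) \<le> norm M * (\<Sum>j\<in>UNIV. cmod (y $ j))"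
proof -
  have entry_le: "cmod (M $ i $ j) \<le> norm M" for j
    using Finite_Cartesian_Product.norm_nth_le[of "M $ i" j]
      Finite_Cartesian_Product.norm_nth_le[of M i] by linarith
  have "cmod ((M *v y) $ i) \<le> (\<Sum>j\<in>UNIV. cmod (M $ i $ j) * cmod (y $ j))"
    unfolding matrix_vector_mult_def by (simp add: order.trans[OF norm_sum] norm_mult)
  also have "\<dots> \<le> (\<Sum>j\<in>UNIV. norm M * cmod (y $ j))"
    by (intro sum_mono mult_right_mono entry_le) simp
  finally show ?thesis by (simp add: sum_distrib_left)
qed

lemma mat_mult_vec: "mat c *v x = c *s x"
  by (simp add: Finite_Cartesian_Product.vec_eq_iff matrix_vector_mult_def
      Finite_Cartesian_Product.mat_def if_distrib if_distribR cong: if_cong)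

lemma bounded_mexp_imp_no_jordan_chain:
  fixes A :: "complex^'n^'n"
  assumes "bounded (range (\<lambda>t. mexp (t *\<^sub>R A)))"
    and "(A - mat ev) *v ((A - mat ev) *v x) = 0"
  shows "(A - mat ev) *v x = 0"
proof (rule ccontr)
  define w where "w = (A - mat ev) *v x"
  assume "(A - mat ev) *v x \<noteq> 0"
  then obtain i where "w $ i \<noteq> 0"
    by (auto simp: w_def Finite_Cartesian_Product.vec_eq_iff)
  have shift: "(A - mat ev) *v y = A *v y - ev *s y" for y
    by (simp add: matrix_vector_mult_diff_rdistrib mat_mult_vec)
  have "(A - mat ev) *v w = 0"
    using assms(2) by (simp only: w_def)
  then have Aw: "A *v w = ev *s w + 0"
    by (simp add: shift)
  have Ax: "A *v x = ev *s x + w"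
    by (simp add: w_def shift)
  from assms(1) obtain B where B: "\<And>t. norm (mexp (t *\<^sub>R A)) \<le> B"
    by (auto simp: bounded_iff)
  have bound: "cmod ((mexp (t *\<^sub>R A) *v y) $ i) \<le> B * (\<Sum>j\<in>UNIV. cmod (y $ j))" for t y
    by (rule order.trans[OF norm_mult_vec_component_le]) (intro mult_right_mono B sum_nonneg; simp)
  show False
  proof (rule exp_times_affine_unbounded)
    show "w $ i \<noteq> 0" by fact
    show "cmod (exp (of_real t * ev) * w $ i) \<le> B * (\<Sum>j\<in>UNIV. cmod (w $ j))" for t
      using bound[of t w] mexp_mult_jordan_chain_component[of A 0 ev w t i] Aw by simp
    show "cmod (exp (of_real t * ev) * (x $ i + of_real t * w $ i)) \<le> B * (\<Sum>j\<in>UNIV. cmod (x $ j))" for t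
      using bound[of t x] mexp_mult_jordan_chain_component[OF Aw[simplified] Ax, of t i] by simp
  qed
qed

section \<open>Diagonalizability\<close>

lemma sum_list_map_eq_imp_eq:
  fixes f g :: "'a \<Rightarrow> 'b::ordered_cancel_comm_monoid_add"
  assumes "sum_list (map f xs) = sum_list (map g xs)"
    and "x \<in> set xs"
    and "\<And>y. y \<in> set xs \<Longrightarrow> g y \<le> f y"
  shows "f x = g x"
  using assms
proof (induction xs)
  case (Cons a xs)
  have rest: "sum_list (map g xs) \<le> sum_list (map f xs)"
    using Cons.prems(3) by (intro sum_list_mono) auto
  have "g a \<le> f a" using Cons.prems(3) by simp
  have "f a = g a"
  proof (rule ccontr)
    assume "f a \<noteq> g a"
    with \<open>g a \<le> f a\<close> have "g a + sum_list (map g xs) < f a + sum_list (map f xs)"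
      by (intro add_less_le_mono rest) simp
    with Cons.prems(1) show False by simp
  qed
  with Cons show ?case by auto
qed simp

lemma diagonal_jordan_matrix:
  assumes "\<And>k a. (k, a) \<in> set n_as \<Longrightarrow> k \<le> 1"
  shows "diagonal_mat (jordan_matrix n_as)"
  using assms
proof (induction n_as)
  case Nil
  then show ?case by (simp add: diagonal_mat_def jordan_matrix_def)
next
  case (Cons p n_as)
  obtain k a where p: "p = (k, a)" by force
  have "k \<le> 1" using Cons.prems p by auto
  moreover have "diagonal_mat (jordan_matrix n_as)"
    using Cons.prems by (intro Cons.IH) auto
  ultimately show ?case
    by (auto simp: p jordan_matrix_Cons diagonal_mat_def index_mat_four_block)
qed

(* dim ker (A - ev)^k is the sum of min k n over the Jordan blocks of size n for ev, so equal
   dimensions for k = 1 and k = 2 leave only blocks of size 1. *)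
lemma similar_diagonal_mat_if_no_jordan_chain:
  fixes A :: "complex mat"
  assumes A: "A \<in> carrier_mat n n"
    and no_chain: "\<And>ev v. v \<in> carrier_vec n \<Longrightarrow>
      char_matrix A ev *\<^sub>v (char_matrix A ev *\<^sub>v v) = 0\<^sub>v n \<Longrightarrow>
      char_matrix A ev *\<^sub>v v = 0\<^sub>v n"
  shows "\<exists>D. similar_mat A D \<and> diagonal_mat D"
proof -
  obtain as where "char_poly A = (\<Prod>a\<leftarrow>as. [:- a, 1:])"
    using char_poly_factorized[OF A] by auto
  from jordan_nf_exists[OF A this] obtain n_as where jnf: "jordan_nf A n_as" ..
  have "k \<le> 1" if "(k, ev) \<in> set n_as" for k ev
  proof -
    let ?C = "char_matrix A ev"
    have C: "?C \<in> carrier_mat n n" using A by simp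
    have "mat_kernel (?C ^\<^sub>m 2) = mat_kernel (?C ^\<^sub>m 1)"
    proof -
      have "?C *\<^sub>v 0\<^sub>v n = 0\<^sub>v n" using C by (intro eq_vecI) auto
      then show ?thesis
        using C no_chain by (auto simp: mat_kernel_def numeral_2_eq_2)
    qed
    then have "dim_gen_eigenspace A ev 2 = dim_gen_eigenspace A ev 1"
      unfolding dim_gen_eigenspace_def kernel_dim_def using C by simp
    then have "sum_list (map (min 2) (map fst [(n, e)\<leftarrow>n_as. e = ev]))
        = sum_list (map (min 1) (map fst [(n, e)\<leftarrow>n_as. e = ev]))"
      unfolding dim_gen_eigenspace[OF jnf] by simp
    moreover have "k \<in> set (map fst [(n, e)\<leftarrow>n_as. e = ev])"
      using that by force
    ultimately have "min 2 k = min (1::nat) k"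
      by (rule sum_list_map_eq_imp_eq) auto
    then show "k \<le> 1" by simp
  qed
  then have "diagonal_mat (jordan_matrix n_as)"
    by (rule diagonal_jordan_matrix)
  moreover have "similar_mat A (jordan_matrix n_as)"
    using jnf by (simp add: jordan_nf_def)
  ultimately show ?thesis by blast
qed

lemma diagonalization_if_similar_diagonal_mat:
  fixes A :: "'a::semiring_1^'n^'n"
  assumes "similar_mat (mat_of_cart A) D" and "diagonal_mat D"
  obtains P Q :: "'a^'n^'n" and d where
    "P ** Q = mat 1" "Q ** P = mat 1" "A = P ** diag_matrix d ** Q"
proof -
  obtain P Q where "similar_mat_wit (mat_of_cart A) D P Q"
    using assms(1) unfolding similar_mat_def by blast
  note PDQ = similar_mat_witD2[OF mat_of_cart_carrier this]
  define cart :: "'a mat \<Rightarrow> 'a^'n^'n" where "cart = cart_of_mat"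
  have "D $$ (nat_of_ix a, nat_of_ix b) = 0" if "a \<noteq> b" for a b :: 'n
    using assms(2) PDQ(5) that unfolding diagonal_mat_def by simp
  then have D: "cart D = diag_matrix (\<lambda>a. D $$ (nat_of_ix a, nat_of_ix a))"
    by (simp add: cart_def cart_of_mat_def diag_matrix_def Finite_Cartesian_Product.vec_eq_iff)
  have "A = cart (P * D * Q)"
    unfolding cart_def PDQ(3)[symmetric] by simp
  also have "\<dots> = cart P ** cart D ** cart Q"
    using PDQ(5-7) by (simp add: cart_def cart_of_mat_mult matrix_mul_assoc)
  finally have "A = cart P ** diag_matrix (\<lambda>a. D $$ (nat_of_ix a, nat_of_ix a)) ** cart Q"
    by (simp only: D)
  moreover have "cart P ** cart Q = mat 1"
    using cart_of_mat_mult[OF PDQ(6,7)] PDQ(1) by (simp add: cart_def cart_of_mat_one)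
  moreover have "cart Q ** cart P = mat 1"
    using cart_of_mat_mult[OF PDQ(7,6)] PDQ(2) by (simp add: cart_def cart_of_mat_one)
  ultimately show ?thesis
    using that by blast
qed

lemma diagonalizable_if_bounded_mexp:
  fixes A :: "complex^'n^'n"
  assumes bounded: "bounded (range (\<lambda>t. mexp (t *\<^sub>R A)))"
  obtains P Q :: "complex^'n^'n" and d where
    "P ** Q = mat 1" "Q ** P = mat 1" "A = P ** diag_matrix d ** Q"
proof -
  let ?C = "\<lambda>ev. char_matrix (mat_of_cart A) ev"
  have "?C ev *\<^sub>v v = 0\<^sub>v CARD('n)"
    if "v \<in> carrier_vec CARD('n)" "?C ev *\<^sub>v (?C ev *\<^sub>v v) = 0\<^sub>v CARD('n)" for ev v
  proof -
    define y :: "complex^'n" where "y = cart_of_vec v"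
    have v: "v = vec_of_cart y" using that(1) by (simp add: y_def)
    have "(A - mat ev) *v ((A - mat ev) *v y) = 0"
      using that(2) by (simp add: v mat_of_cart_char_matrix mat_of_cart_mult_vec vec_of_cart_eq_0_iff)
    then have "(A - mat ev) *v y = 0"
      by (rule bounded_mexp_imp_no_jordan_chain[OF bounded])
    then show ?thesis
      by (simp add: v mat_of_cart_char_matrix mat_of_cart_mult_vec vec_of_cart_eq_0_iff)
  qed
  then obtain D where "similar_mat (mat_of_cart A) D" "diagonal_mat D"
    using similar_diagonal_mat_if_no_jordan_chain[OF mat_of_cart_carrier] by blast
  then show ?thesis
    using diagonalization_if_similar_diagonal_mat that by blast
qed

section \<open>Laurent polynomial paths\<close>

definition laurent_path :: "(real \<Rightarrow> complex^'n^'n) \<Rightarrow> bool" where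
  "laurent_path \<gamma> \<longleftrightarrow> (\<exists>(N::nat) (c :: int \<Rightarrow> complex^'n^'n). \<forall>t i j.
     \<gamma> t $ i $ j = (\<Sum>k\<in>{-int N..int N}. c k $ i $ j * exp (2 * pi * \<i> * of_int k * of_real t)))"

lemma polynomial_loop_iff: "polynomial_loop G \<gamma> \<longleftrightarrow> (\<forall>t. \<gamma> t \<in> G) \<and> laurent_path \<gamma>"
  by (simp add: polynomial_loop_def laurent_path_def)

lemma laurent_path_finite_sum:
  fixes a :: "'i::finite \<Rightarrow> complex^'n^'n" and k :: "'i \<Rightarrow> int"
  assumes "\<And>t i j. \<gamma> t $ i $ j
    = (\<Sum>x\<in>UNIV. a x $ i $ j * exp (2 * pi * \<i> * of_int (k x) * of_real t))"
  shows "laurent_path \<gamma>"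
proof -
  define M where "M = Max (range (\<lambda>x. \<bar>k x\<bar>))"
  define N where "N = nat M"
  have bound: "\<bar>k x\<bar> \<le> M" for x
    unfolding M_def by (rule Max_ge) auto
  then have "0 \<le> M"
    using abs_ge_zero order_trans by blast
  then have "\<bar>k x\<bar> \<le> int N" for x
    using bound[of x] by (simp add: N_def)
  then have freq: "k ` UNIV \<subseteq> {-int N..int N}"
    by (auto simp: abs_le_iff) (metis minus_le_iff)
  define c where "c m = (\<chi> i j. \<Sum>x | k x = m. a x $ i $ j)" for m
  have "\<gamma> t $ i $ j = (\<Sum>m\<in>{-int N..int N}. c m $ i $ j * exp (2 * pi * \<i> * of_int m * of_real t))"
    for t i j
  proof -
    have "(\<Sum>m\<in>{-int N..int N}. c m $ i $ j * exp (2 * pi * \<i> * of_int m * of_real t))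
        = (\<Sum>m\<in>{-int N..int N}. \<Sum>x\<in>{x \<in> UNIV. k x = m}.
            a x $ i $ j * exp (2 * pi * \<i> * of_int (k x) * of_real t))"
      unfolding c_def by (auto simp: sum_distrib_right intro!: sum.cong)
    also have "\<dots> = (\<Sum>x\<in>UNIV. a x $ i $ j * exp (2 * pi * \<i> * of_int (k x) * of_real t))"
      by (rule sum.group[OF finite finite_atLeastAtMost_int freq])
    finally show ?thesis
      by (simp only: assms)
  qed
  then show ?thesis
    unfolding laurent_path_def by blast
qed

lemma diag_exp_intertwiner_freq:
  assumes "diag_matrix (\<lambda>a. exp (d1 a)) ** R = R ** diag_matrix (\<lambda>a. exp (d2 a))"
    and "R $ a $ b \<noteq> 0"
  shows "\<exists>k::int. d2 b - d1 a = 2 * pi * \<i> * of_int k"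
proof -
  have "exp (d1 a) * R $ a $ b = R $ a $ b * exp (d2 b)"
    using arg_cong[OF assms(1), of "\<lambda>M. M $ a $ b"]
    by (simp add: diag_matrix_mult_component mult_diag_matrix_component)
  then have "exp (d2 b) = exp (d1 a)"
    using assms(2) by simp
  then obtain k :: int where "d2 b = d1 a + of_int (2 * k) * pi * \<i>"
    by (auto simp: exp_eq)
  then show ?thesis
    by (intro exI[of _ k]) (simp add: algebra_simps)
qed

lemma eta_conj_diag_matrix:
  fixes P Q :: "complex^'n^'n"
  assumes "P ** Q = mat 1" "Q ** P = mat 1"
  shows "eta (P ** diag_matrix d ** Q) t = P ** diag_matrix (\<lambda>a. exp (of_real t * d a)) ** Q"
  unfolding eta_def scaleR_conj_diag_matrix by (rule mexp_conj_diag_matrix[OF assms])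

lemma eta_neg_mult_eta_conj_diag_matrix_component:
  fixes P1 Q1 P2 Q2 :: "complex^'n^'n"
  assumes inv1: "P1 ** Q1 = mat 1" "Q1 ** P1 = mat 1"
    and inv2: "P2 ** Q2 = mat 1" "Q2 ** P2 = mat 1"
  shows "(eta (- (P1 ** diag_matrix d1 ** Q1)) t ** eta (P2 ** diag_matrix d2 ** Q2) t) $ i $ j
    = (\<Sum>a\<in>UNIV. \<Sum>b\<in>UNIV.
        P1 $ i $ a * (Q1 ** P2) $ a $ b * Q2 $ b $ j * exp (of_real t * (d2 b - d1 a)))"
proof -
  let ?e1 = "\<lambda>a. exp (of_real (- t) * d1 a)" and ?e2 = "\<lambda>b. exp (of_real t * d2 b)"
  have "eta (- (P1 ** diag_matrix d1 ** Q1)) t ** eta (P2 ** diag_matrix d2 ** Q2) t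
      = P1 ** (diag_matrix ?e1 ** (Q1 ** P2) ** diag_matrix ?e2) ** Q2"
    using eta_conj_diag_matrix[OF inv1, of d1 "- t"] eta_conj_diag_matrix[OF inv2, of d2 t]
    by (simp add: eta_def matrix_mul_assoc)
  then have "(eta (- (P1 ** diag_matrix d1 ** Q1)) t ** eta (P2 ** diag_matrix d2 ** Q2) t) $ i $ j
      = (\<Sum>a\<in>UNIV. \<Sum>b\<in>UNIV. P1 $ i $ a * (?e1 a * (Q1 ** P2) $ a $ b * ?e2 b) * Q2 $ b $ j)"
    by (simp only: matrix_mult_mult_component diag_matrix_mult_component mult_diag_matrix_component)
  moreover have phase: "?e1 a * ?e2 b = exp (of_real t * (d2 b - d1 a))" for a b
    by (simp add: exp_add[symmetric] algebra_simps)
  ultimately show ?thesis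
    by (simp add: mult_ac flip: phase)
qed

lemma mexp_conj_diag_matrix_eq_imp_intertwiner:
  fixes P1 Q1 P2 Q2 :: "complex^'n^'n"
  assumes inv1: "P1 ** Q1 = mat 1" "Q1 ** P1 = mat 1"
    and inv2: "P2 ** Q2 = mat 1" "Q2 ** P2 = mat 1"
    and mexp_eq: "mexp (P1 ** diag_matrix d1 ** Q1) = mexp (P2 ** diag_matrix d2 ** Q2)"
  shows "diag_matrix (\<lambda>a. exp (d1 a)) ** (Q1 ** P2) = (Q1 ** P2) ** diag_matrix (\<lambda>a. exp (d2 a))"
proof -
  have "diag_matrix (\<lambda>a. exp (d1 a)) ** (Q1 ** P2)
      = (Q1 ** P1) ** diag_matrix (\<lambda>a. exp (d1 a)) ** (Q1 ** P2)"
    by (simp add: inv1)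
  also have "\<dots> = Q1 ** (P1 ** diag_matrix (\<lambda>a. exp (d1 a)) ** Q1) ** P2"
    by (simp only: matrix_mul_assoc)
  also have "\<dots> = Q1 ** (P2 ** diag_matrix (\<lambda>a. exp (d2 a)) ** Q2) ** P2"
    using mexp_eq by (simp add: mexp_conj_diag_matrix inv1 inv2)
  also have "\<dots> = (Q1 ** P2) ** diag_matrix (\<lambda>a. exp (d2 a)) ** (Q2 ** P2)"
    by (simp only: matrix_mul_assoc)
  also have "\<dots> = (Q1 ** P2) ** diag_matrix (\<lambda>a. exp (d2 a))"
    by (simp add: inv2)
  finally show ?thesis .
qed

lemma laurent_path_conj_diag_matrix:
  fixes P1 Q1 P2 Q2 :: "complex^'n^'n"
  assumes inv1: "P1 ** Q1 = mat 1" "Q1 ** P1 = mat 1"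
    and inv2: "P2 ** Q2 = mat 1" "Q2 ** P2 = mat 1"
    and mexp_eq: "mexp (P1 ** diag_matrix d1 ** Q1) = mexp (P2 ** diag_matrix d2 ** Q2)"
  shows "laurent_path (\<lambda>t. eta (- (P1 ** diag_matrix d1 ** Q1)) t ** eta (P2 ** diag_matrix d2 ** Q2) t)"
proof -
  define R where "R = Q1 ** P2"
  have "\<forall>x. \<exists>k::int.
      R $ fst x $ snd x \<noteq> 0 \<longrightarrow> d2 (snd x) - d1 (fst x) = 2 * pi * \<i> * of_int k"
    using diag_exp_intertwiner_freq[OF mexp_conj_diag_matrix_eq_imp_intertwiner[OF assms]]
    unfolding R_def by blast
  then obtain k :: "'n \<times> 'n \<Rightarrow> int"
    where k: "\<And>a b. R $ a $ b \<noteq> 0 \<Longrightarrow> d2 b - d1 a = 2 * pi * \<i> * of_int (k (a, b))"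
    unfolding choice_iff by fastforce
  show ?thesis
  proof (rule laurent_path_finite_sum)
    fix t i j
    let ?E = "\<lambda>x. exp (2 * pi * \<i> * of_int (k x) * of_real t)"
    have "P1 $ i $ a * R $ a $ b * Q2 $ b $ j * exp (of_real t * (d2 b - d1 a))
        = P1 $ i $ a * R $ a $ b * Q2 $ b $ j * ?E (a, b)" for a b
      by (cases "R $ a $ b = 0") (simp_all add: k algebra_simps)
    then have "(eta (- (P1 ** diag_matrix d1 ** Q1)) t ** eta (P2 ** diag_matrix d2 ** Q2) t) $ i $ j
        = (\<Sum>a\<in>UNIV. \<Sum>b\<in>UNIV. P1 $ i $ a * R $ a $ b * Q2 $ b $ j * ?E (a, b))"
      unfolding eta_neg_mult_eta_conj_diag_matrix_component[OF inv1 inv2] R_def[symmetric]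
      by (simp only:)
    also have "\<dots> = (\<Sum>x\<in>UNIV.
        (\<chi> i j. P1 $ i $ fst x * R $ fst x $ snd x * Q2 $ snd x $ j) $ i $ j * ?E x)"
      by (simp add: sum.cartesian_product split_def)
    finally show "(eta (- (P1 ** diag_matrix d1 ** Q1)) t ** eta (P2 ** diag_matrix d2 ** Q2) t) $ i $ j
        = (\<Sum>x\<in>UNIV.
            (\<chi> i j. P1 $ i $ fst x * R $ fst x $ snd x * Q2 $ snd x $ j) $ i $ j * ?E x)" .
  qed
qed

theorem mainTheorem2:
  fixes G :: "(complex^'n^'n) set" and \<xi>1 \<xi>2 :: "complex^'n^'n"
  assumes "compact_connected_matrix_group G"
    and "\<xi>1 \<in> lie_algebra G" and "\<xi>2 \<in> lie_algebra G"
    and "mexp \<xi>1 = mexp \<xi>2"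
  shows "polynomial_loop G (\<lambda>t. eta (- \<xi>1) t ** eta \<xi>2 t)"
proof -
  have "compact G" and mult_closed: "\<And>A B. A \<in> G \<Longrightarrow> B \<in> G \<Longrightarrow> A ** B \<in> G"
    using assms(1) unfolding compact_connected_matrix_group_def by blast+
  have one_param: "eta \<xi> t \<in> G" if "\<xi> \<in> lie_algebra G" for \<xi> t
    using that by (simp add: lie_algebra_def eta_def)
  have "bounded (range (\<lambda>t. mexp (t *\<^sub>R \<xi>)))" if "\<xi> \<in> lie_algebra G" for \<xi>
    using one_param[OF that] \<open>compact G\<close> unfolding eta_def
    by (intro bounded_subset[OF compact_imp_bounded]) auto
  note diagonalize = diagonalizable_if_bounded_mexp[OF this]
  obtain P1 Q1 :: "complex^'n^'n" and d1
    where D1: "P1 ** Q1 = mat 1" "Q1 ** P1 = mat 1" "\<xi>1 = P1 ** diag_matrix d1 ** Q1"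
    using diagonalize[OF assms(2)] by blast
  obtain P2 Q2 :: "complex^'n^'n" and d2
    where D2: "P2 ** Q2 = mat 1" "Q2 ** P2 = mat 1" "\<xi>2 = P2 ** diag_matrix d2 ** Q2"
    using diagonalize[OF assms(3)] by blast
  have "laurent_path (\<lambda>t. eta (- \<xi>1) t ** eta \<xi>2 t)"
    using assms(4) unfolding D1(3) D2(3)
    by (rule laurent_path_conj_diag_matrix[OF D1(1,2) D2(1,2)])
  moreover have "eta (- \<xi>1) t ** eta \<xi>2 t \<in> G" for t
    using mult_closed[OF one_param[OF assms(2), of "- t"] one_param[OF assms(3), of t]]
    by (simp add: eta_def)
  ultimately show ?thesis
    by (simp add: polynomial_loop_iff)
qed

end
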